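(* Let $G$ be a connected graph with $n\ge 12$ vertices and $n+k$ edges, where $1\le k\le 10$. If the minimum degree satisfies $\delta(G)\ge 2$, then $R(G)>\sqrt{n-1}+\frac{2(k+1)}{n\sqrt{n-1}}$.
   Context: All graphs are finite and simple. For a vertex $u$, $d(u)$ is its degree. The Randić index is $R(G)=\sum_{\{u,v\}\in E(G)} \frac{1}{\sqrt{d(u)d(v)}}$. *)

theory Defs
  imports Complex_Main
begin

definition simple_graph :: "'a set \<Rightarrow> 'a set set \<Rightarrow> bool" where
  "simple_graph V E \<longleftrightarrow> finite V \<and> (\<forall>e\<in>E. e \<subseteq> V \<and> card e = 2)"

definition degree :: "'a set set \<Rightarrow> 'a \<Rightarrow> nat" where
  "degree E u = card {e \<in> E. u \<in> e}"

definition adj :: "'a set set \<Rightarrow> 'a \<Rightarrow> 'a \<Rightarrow> bool" where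
  "adj E u v \<longleftrightarrow> {u, v} \<in> E"

definition connected_graph :: "'a set \<Rightarrow> 'a set set \<Rightarrow> bool" where
  "connected_graph V E \<longleftrightarrow> V \<noteq> {} \<and> (\<forall>u\<in>V. \<forall>v\<in>V. (adj E)\<^sup>*\<^sup>* u v)"

definition randic :: "'a set set \<Rightarrow> real" where
  "randic E = (\<Sum>e\<in>E. 1 / sqrt (\<Prod>u\<in>e. real (degree E u)))"

end

theory Submission imports Defs begin

text \<open>If every degree lies in [2, M], then each edge uv satisfies
  1/sqrt(d u d v) \<ge> c (1/d u + 1/d v) with c = sqrt(2M)/(M+2), the extremal case being
  d u = 2, d v = M. Summing over the edges, the weights 1/d u add up to one per vertex.\<close>

lemma simple_graph_finite_edges:
  assumes "simple_graph V E"
  shows "finite E"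
proof -
  have "E \<subseteq> Pow V" using assms unfolding simple_graph_def by auto
  thus ?thesis using assms unfolding simple_graph_def by (meson finite_Pow_iff finite_subset)
qed

lemma simple_graph_edgeE:
  assumes "simple_graph V E" "e \<in> E"
  obtains a b where "a \<noteq> b" "e = {a, b}" "a \<in> V" "b \<in> V"
  using assms unfolding simple_graph_def by (metis card_2_iff insert_subset)

lemma degree_le_card_minus_one:
  assumes "simple_graph V E" "u \<in> V"
  shows "degree E u \<le> card V - 1"
proof -
  have fin: "finite V" using assms(1) unfolding simple_graph_def by simp
  have "{e \<in> E. u \<in> e} \<subseteq> (\<lambda>w. {u, w}) ` (V - {u})"
  proof
    fix e assume "e \<in> {e \<in> E. u \<in> e}"
    then obtain a b where "a \<noteq> b" "e = {a, b}" "a \<in> V" "b \<in> V" "u \<in> e"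
      using simple_graph_edgeE[OF assms(1)] by blast
    thus "e \<in> (\<lambda>w. {u, w}) ` (V - {u})" by auto
  qed
  hence "degree E u \<le> card ((\<lambda>w. {u, w}) ` (V - {u}))"
    unfolding degree_def using fin by (intro card_mono) auto
  also have "\<dots> \<le> card (V - {u})" using fin by (rule card_image_le[OF finite_Diff])
  finally show ?thesis using assms(2) fin by simp
qed

lemma sum_edges_sum_ends:
  fixes f :: "'a \<Rightarrow> real"
  assumes "simple_graph V E"
  shows "(\<Sum>e\<in>E. \<Sum>u\<in>e. f u) = (\<Sum>u\<in>V. real (degree E u) * f u)"
proof -
  have finV: "finite V" using assms unfolding simple_graph_def by simp
  have finE: "finite E" using simple_graph_finite_edges[OF assms] .
  have "(\<Sum>e\<in>E. \<Sum>u\<in>e. f u) = (\<Sum>e\<in>E. \<Sum>u\<in>V. if u \<in> e then f u else 0)"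
  proof (rule sum.cong[OF refl])
    fix e assume "e \<in> E"
    hence "e = V \<inter> e" using assms unfolding simple_graph_def by auto
    thus "(\<Sum>u\<in>e. f u) = (\<Sum>u\<in>V. if u \<in> e then f u else 0)"
      using finV by (metis sum.inter_restrict)
  qed
  also have "\<dots> = (\<Sum>u\<in>V. \<Sum>e\<in>E. if u \<in> e then f u else 0)"
    by (rule sum.swap)
  also have "\<dots> = (\<Sum>u\<in>V. real (degree E u) * f u)"
    using finE by (simp add: sum.If_cases degree_def Int_def)
  finally show ?thesis .
qed

lemma inverse_degree_edge_bound:
  fixes a b M :: real
  assumes "2 \<le> a" "2 \<le> b" "a \<le> M" "b \<le> M"
  shows "sqrt (2 * M) / (M + 2) * (1 / a + 1 / b) \<le> 1 / sqrt (a * b)"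
proof (rule power2_le_imp_le)
  have "0 \<le> (M * b - 2 * a) * (M * a - 2 * b)"
  proof (intro mult_nonneg_nonneg)
    have "M * 2 \<le> M * b" "M * 2 \<le> M * a" using assms by (intro mult_left_mono; simp)+
    thus "0 \<le> M * b - 2 * a" "0 \<le> M * a - 2 * b" using assms by linarith+
  qed
  hence "2 * M * (a + b)^2 \<le> a * b * (M + 2)^2"
    by (simp add: power2_eq_square algebra_simps)
  hence "2 * M * (a + b)^2 / ((M + 2)^2 * (a * b)^2) \<le> a * b * (M + 2)^2 / ((M + 2)^2 * (a * b)^2)"
    by (intro divide_right_mono) auto
  moreover have "sqrt (2 * M) / (M + 2) * (1 / a + 1 / b) = sqrt (2 * M) * (a + b) / ((M + 2) * (a * b))"
    using assms by (simp add: field_simps)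
  hence "(sqrt (2 * M) / (M + 2) * (1 / a + 1 / b))^2 = 2 * M * (a + b)^2 / ((M + 2)^2 * (a * b)^2)"
    using assms by (simp add: power_mult_distrib power_divide)
  moreover have "(1 / sqrt (a * b))^2 = a * b * (M + 2)^2 / ((M + 2)^2 * (a * b)^2)"
    using assms by (simp add: power_divide power2_eq_square)
  ultimately show "(sqrt (2 * M) / (M + 2) * (1 / a + 1 / b))^2 \<le> (1 / sqrt (a * b))^2"
    by simp
qed (use assms in simp)

lemma randic_ge_min_degree_two:
  assumes "simple_graph V E" "\<forall>u\<in>V. degree E u \<ge> 2"
  defines "M \<equiv> real (card V) - 1"
  shows "sqrt (2 * M) / (M + 2) * real (card V) \<le> randic E"
proof -
  define d where "d u = real (degree E u)" for u
  have "(\<Sum>u\<in>V. d u * (1 / d u)) = (\<Sum>u\<in>V. 1)"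
    using assms(2) unfolding d_def by (intro sum.cong) auto
  hence "real (card V) = (\<Sum>u\<in>V. d u * (1 / d u))"
    by simp
  also have "\<dots> = (\<Sum>e\<in>E. \<Sum>u\<in>e. 1 / d u)"
    unfolding d_def by (rule sum_edges_sum_ends[OF assms(1), symmetric])
  finally have "sqrt (2 * M) / (M + 2) * real (card V)
      = (\<Sum>e\<in>E. sqrt (2 * M) / (M + 2) * (\<Sum>u\<in>e. 1 / d u))"
    by (simp add: sum_distrib_left)
  also have "\<dots> \<le> randic E"
    unfolding randic_def
  proof (rule sum_mono)
    fix e assume "e \<in> E"
    then obtain a b where ab: "a \<noteq> b" "e = {a, b}" "a \<in> V" "b \<in> V"
      using simple_graph_edgeE[OF assms(1)] by blast
    have "card V \<ge> 1"
      using ab assms(1) unfolding simple_graph_def by (auto simp: Suc_le_eq card_gt_0_iff)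
    hence "d w \<le> M" if "w \<in> V" for w
      using degree_le_card_minus_one[OF assms(1) that] unfolding d_def M_def
      by (simp add: of_nat_diff flip: of_nat_le_iff)
    moreover have "2 \<le> d a" "2 \<le> d b" using assms(2) ab unfolding d_def by auto
    ultimately have "sqrt (2 * M) / (M + 2) * (1 / d a + 1 / d b) \<le> 1 / sqrt (d a * d b)"
      using ab by (intro inverse_degree_edge_bound) auto
    thus "sqrt (2 * M) / (M + 2) * (\<Sum>u\<in>e. 1 / d u) \<le> 1 / sqrt (\<Prod>u\<in>e. real (degree E u))"
      using ab unfolding d_def by simp
  qed
  finally show ?thesis .
qed

lemma cubic_estimate:
  fixes x :: real
  assumes "12 \<le> x"
  shows "(x * (x - 1) + 22) * (x + 1) < 1.4 * x^2 * (x - 1)"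
proof -
  have "12 * 3.4 \<le> x * (0.4 * x - 1.4)" using assms by (intro mult_mono) auto
  hence "12 * 19.8 \<le> x * (x * (0.4 * x - 1.4) - 21)" using assms by (intro mult_mono) auto
  thus ?thesis by (simp add: power2_eq_square algebra_simps)
qed

lemma sqrt_plus_inverse_lt:
  fixes x :: real
  assumes "12 \<le> x"
  shows "sqrt (x - 1) + 22 / (x * sqrt (x - 1)) < sqrt (2 * (x - 1)) / (x + 1) * x"
proof -
  define s where "s = sqrt (x - 1)"
  have s: "s > 0" "s^2 = x - 1" using assms unfolding s_def by auto
  have "1.4 < sqrt (2::real)" by (rule real_less_rsqrt) (simp add: power2_eq_square)
  hence "1.4 * x^2 * (x - 1) \<le> sqrt 2 * x^2 * (x - 1)"
    using assms by (intro mult_right_mono) auto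
  hence "(x * s^2 + 22) * (x + 1) < sqrt 2 * x^2 * s^2"
    using cubic_estimate[OF assms] s(2) by simp
  also have "\<dots> = sqrt 2 * s * x * (x * s)"
    by (simp add: power2_eq_square)
  finally have "(x * s^2 + 22) * (x + 1) < sqrt 2 * s * x * (x * s)" .
  hence "x * s^2 + 22 < sqrt 2 * s * x * (x * s) / (x + 1)"
    using assms by (simp add: pos_less_divide_eq)
  hence "(x * s^2 + 22) / (x * s) < sqrt 2 * s * x * (x * s) / (x + 1) / (x * s)"
    using assms s by (intro divide_strict_right_mono) auto
  also have "\<dots> = sqrt 2 * s / (x + 1) * x"
    using assms s by simp
  finally have "(x * s^2 + 22) / (x * s) < sqrt 2 * s / (x + 1) * x" .
  moreover have "(x * s^2 + 22) / (x * s) = s + 22 / (x * s)"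
    using assms s by (simp add: field_simps power2_eq_square)
  moreover have "sqrt (2 * (x - 1)) = sqrt 2 * s"
    unfolding s_def by (rule real_sqrt_mult)
  ultimately show ?thesis unfolding s_def by simp
qed

theorem lemma2p7:
  fixes V :: "'a set" and E :: "'a set set" and n k :: nat
  assumes "simple_graph V E"
    and "connected_graph V E"
    and "card V = n" and "n \<ge> 12"
    and "card E = n + k" and "1 \<le> k" and "k \<le> 10"
    and "\<forall>u\<in>V. degree E u \<ge> 2"
  shows "randic E > sqrt (real n - 1) + 2 * (real k + 1) / (real n * sqrt (real n - 1))"
proof -
  have "sqrt (2 * (real n - 1)) / (real n + 1) * real n \<le> randic E"
    using randic_ge_min_degree_two[OF assms(1,8)] assms(3) by (simp add: add.commute)
  moreover have "2 * (real k + 1) / (real n * sqrt (real n - 1)) \<le> 22 / (real n * sqrt (real n - 1))"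
    using assms(4,7) by (intro divide_right_mono) auto
  moreover have "sqrt (real n - 1) + 22 / (real n * sqrt (real n - 1))
      < sqrt (2 * (real n - 1)) / (real n + 1) * real n"
    using assms(4) by (intro sqrt_plus_inverse_lt) simp
  ultimately show ?thesis by linarith
qed

end
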